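(* Let $p\equiv 1\pmod 4$ be a prime. For all $\delta_1,\delta_2\in\{\pm1\}$, the residue class \[ 2\det\left[\left(\tfrac{j+k}{p}\right)+\left(\tfrac{j-k}{p}\right)+\delta_1\left(\tfrac{j^2+\delta_2k^2}{p}\right)\right]_{0\le j,k\le (p-1)/2} \] is a nonzero quadratic residue modulo $p$. More precisely, writing $p=4m+1$, \[ \det\left[\left(\tfrac{j+k}{p}\right)+\left(\tfrac{j-k}{p}\right)+\delta_1\left(\tfrac{j^2+\delta_2k^2}{p}\right)\right]_{0\le j,k\le 2m} \equiv(-1)^{m(2m+1)}\delta_1^{2m+1}\delta_2^{m(2m+1)}\left(\prod_{r=0}^{2m}\binom{2m}{r}\right)\prod_{0\le i<j\le 2m}(j^2-i^2)^2\pmod p. \]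
   Context: $\left(\frac{t}{p}\right)$ denotes the Legendre symbol modulo $p$, with $\left(\frac{0}{p}\right)=0$. *)

theory Defs
  imports "HOL-Number_Theory.Number_Theory" "Jordan_Normal_Form.Determinant"
begin

definition legmat :: "int \<Rightarrow> nat \<Rightarrow> int \<Rightarrow> int \<Rightarrow> int mat" where
  "legmat p m d1 d2 = mat (2*m+1) (2*m+1)
     (\<lambda>(j,k). Legendre (int j + int k) p + Legendre (int j - int k) p
              + d1 * Legendre (int j ^ 2 + d2 * int k ^ 2) p)"

end

theory Submission
  imports Defs
begin

(* By Euler's criterion (t/p) = t^(2m) mod p, so the matrix is congruent entrywise to
   M = [(j+k)^(2m) + (j-k)^(2m) + d1 (j^2 + d2 k^2)^(2m)].  Expanding the binomials gives
   M = X T Y with Vandermonde matrices X = [(j^2)^(2m-e)], Y = [(k^2)^s] and T lower triangular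
   with diagonal d1 d2^s C(2m,s), which evaluates det M exactly.  For the residuosity, raise
   2 det M to the power 2m: the squared Vandermonde product contributes 1 by Fermat, while
   prod C(2m,r) * (prod r!)^2 = (2m)!^(2m+1), Wilson's ((2m)!)^2 = -1 and 2^(2m) = (-1)^m give
   (2 prod C(2m,r))^(2m) = 1; Euler's criterion then makes 2 det M a nonzero square. *)

lemma det_mat_scale_rows:
  "det (mat n n (\<lambda>(i,j). c i * f i j)) = prod c {0..<n} * det (mat n n (\<lambda>(i,j). f i j))"
proof -
  have "mat n n (\<lambda>(i,j). c i * f i j) = mat\<^sub>r n n (\<lambda>i. c i \<cdot>\<^sub>v vec n (f i))"
    and "mat n n (\<lambda>(i,j). f i j) = mat\<^sub>r n n (\<lambda>i. vec n (f i))"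
    by auto
  then show ?thesis
    by (simp add: det_rows_mul)
qed

lemma det_permute_rows_cols:
  assumes A: "A \<in> carrier_mat n n" and p: "p permutes {0..<n}"
  shows "det (mat n n (\<lambda>(i,j). A $$ (p i, p j))) = det A"
proof -
  define A' where "A' = mat n n (\<lambda>(i,j). A $$ (i, p j))"
  have A': "A' \<in> carrier_mat n n" by (simp add: A'_def)
  have in_range: "i < n \<Longrightarrow> p i < n" for i
    using p by (simp add: permutes_in_image)
  have "mat n n (\<lambda>(i,j). A $$ (p i, p j)) = mat n n (\<lambda>(i,j). A' $$ (p i, j))"
    by (rule eq_matI) (auto simp: A'_def in_range)
  then have "det (mat n n (\<lambda>(i,j). A $$ (p i, p j))) = signof p * det A'"
    by (simp add: det_permute_rows[OF A' p])
  also have "det A' = signof p * det A"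
  proof -
    have "transpose_mat A' = mat n n (\<lambda>(i,j). transpose_mat A $$ (p i, j))"
      using A by (auto simp: A'_def in_range)
    then have "det A' = signof p * det (transpose_mat A)"
      using det_transpose[OF A'] det_permute_rows[of "transpose_mat A" n p] A p by simp
    then show ?thesis
      using det_transpose[OF A] by simp
  qed
  finally show ?thesis
    by (simp add: sign_def)
qed

lemma det_vandermonde_rev:
  fixes x :: "nat \<Rightarrow> 'a::comm_ring_1"
  shows "det (mat n n (\<lambda>(i,j). x i ^ (n - 1 - j))) = (\<Prod>j<n. \<Prod>i<j. x i - x j)"
proof (induction n)
  case 0
  then show ?case by (simp add: det_def)
next
  case (Suc n)
  define A where "A = mat (Suc n) (Suc n) (\<lambda>(i,j). x i ^ (n - j))"
  define E where
    "E = mat (Suc n) (Suc n) (\<lambda>(i,j). (if i = j then 1 else 0) + (if i = Suc j then - x n else 0))"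
  define B where
    "B = mat (Suc n) (Suc n) (\<lambda>(i,j). if j < n then (x i - x n) * x i ^ (n - 1 - j) else 1)"
  have A: "A \<in> carrier_mat (Suc n) (Suc n)" and E: "E \<in> carrier_mat (Suc n) (Suc n)"
    and B: "B \<in> carrier_mat (Suc n) (Suc n)" by (simp_all add: A_def E_def B_def)
  have "det E = prod_list (diag_mat E)"
    by (rule det_lower_triangular[OF _ E]) (auto simp: E_def)
  also have "diag_mat E = replicate (Suc n) 1"
    by (rule nth_equalityI) (auto simp: E_def diag_mat_def simp del: upt_Suc replicate_Suc)
  finally have det_E: "det E = 1"
    by (simp del: replicate_Suc)
  \<comment> \<open>\<open>A * E\<close> subtracts \<open>x n\<close> times column \<open>j + 1\<close> from column \<open>j\<close> of \<open>A\<close>\<close>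
  have "A * E = B"
  proof (rule eq_matI)
    fix i j assume "i < dim_row B" "j < dim_col B"
    then have i: "i < Suc n" and j: "j < Suc n" by (auto simp: B_def)
    have "(A * E) $$ (i,j)
        = (\<Sum>k<Suc n. x i ^ (n - k) * ((if k = j then 1 else 0) + (if k = Suc j then - x n else 0)))"
      using i j by (auto simp: A_def E_def scalar_prod_def atLeast0LessThan intro: sum.cong)
    also have "\<dots> = (\<Sum>k<Suc n. if k = j then x i ^ (n - k) else 0)
        - (\<Sum>k<Suc n. if k = Suc j then x n * x i ^ (n - k) else 0)"
      unfolding sum_subtractf[symmetric] by (intro sum.cong) auto
    also have "\<dots> = B $$ (i,j)"
    proof (cases "j < n")
      case True
      then have "n - j = Suc (n - 1 - j)" by auto
      with True i j show ?thesis by (simp add: B_def algebra_simps)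
    qed (use i j in \<open>simp add: B_def\<close>)
    finally show "(A * E) $$ (i,j) = B $$ (i,j)" .
  qed (auto simp: A_def E_def B_def)
  then have "det A = det B"
    using det_mult[OF A E] det_E by simp
  also have "det B = (\<Sum>j<Suc n. B $$ (n,j) * cofactor B n j)"
    by (rule laplace_expansion_row[OF B]) simp
  also have "\<dots> = det (mat_delete B n n)"
    by (simp add: B_def cofactor_def)
  also have "mat_delete B n n = mat n n (\<lambda>(i,j). (x i - x n) * x i ^ (n - 1 - j))"
    by (rule eq_matI) (auto simp: mat_delete_def B_def)
  also have "det \<dots> = (\<Prod>i<n. x i - x n) * (\<Prod>j<n. \<Prod>i<j. x i - x j)"
    using Suc.IH by (simp add: det_mat_scale_rows atLeast0LessThan)
  finally show ?case
    by (simp add: A_def mult.commute)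
qed

lemma prod_triangle_reflect:
  fixes f :: "nat \<Rightarrow> nat \<Rightarrow> 'a::comm_monoid_mult"
  shows "(\<Prod>j<n. \<Prod>i<j. f (n - 1 - i) (n - 1 - j)) = (\<Prod>j<n. \<Prod>i<j. f j i)"
proof -
  have Sigma: "(\<Prod>j<n. \<Prod>i<j. g j i) = (\<Prod>(j,i)\<in>Sigma {..<n} lessThan. g j i)"
    for g :: "nat \<Rightarrow> nat \<Rightarrow> 'a"
    by (simp add: prod.Sigma)
  show ?thesis
    unfolding Sigma
    by (rule prod.reindex_bij_witness[of _ "\<lambda>(j,i). (n - 1 - i, n - 1 - j)"
          "\<lambda>(j,i). (n - 1 - i, n - 1 - j)"]) auto
qed

lemma det_vandermonde:
  fixes x :: "nat \<Rightarrow> 'a::comm_ring_1"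
  shows "det (mat n n (\<lambda>(i,j). x i ^ j)) = (\<Prod>j<n. \<Prod>i<j. x j - x i)"
proof -
  define r where "r i = (if i < n then n - 1 - i else i)" for i
  have r: "r permutes {0..<n}"
    by (rule bij_imp_permutes[OF bij_betwI[of r _ _ r]]) (auto simp: r_def)
  define V where "V = mat n n (\<lambda>(i,j). x (r i) ^ (n - 1 - j))"
  have "mat n n (\<lambda>(i,j). x i ^ j) = mat n n (\<lambda>(i,j). V $$ (r i, r j))"
    by (rule eq_matI) (auto simp: r_def V_def)
  then have "det (mat n n (\<lambda>(i,j). x i ^ j)) = det V"
    by (simp add: det_permute_rows_cols[OF _ r] V_def)
  also have "\<dots> = (\<Prod>j<n. \<Prod>i<j. x (n - 1 - i) - x (n - 1 - j))"
    unfolding V_def det_vandermonde_rev by (intro prod.cong) (auto simp: r_def)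
  also have "\<dots> = (\<Prod>j<n. \<Prod>i<j. x j - x i)"
    by (rule prod_triangle_reflect)
  finally show ?thesis .
qed

lemma sum_atMost_even_odd:
  fixes f :: "nat \<Rightarrow> 'a::comm_monoid_add"
  shows "(\<Sum>k\<le>2*m. f k) = (\<Sum>s\<le>m. f (2*s)) + (\<Sum>s<m. f (2*s+1))"
proof (induction m)
  case (Suc m)
  have "2 * Suc m = Suc (Suc (2*m))" by simp
  then show ?case
    by (simp only: sum.atMost_Suc sum.lessThan_Suc Suc.IH) (simp add: add_ac)
qed simp

lemma binomial_ring_even_part:
  fixes a b :: "'a::comm_ring_1"
  shows "(a + b)^(2*m) + (a - b)^(2*m) = 2 * (\<Sum>s\<le>m. of_nat (2*m choose (2*s)) * (b^2)^s * (a^2)^(m - s))"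
proof -
  define f where "f k = of_nat (2*m choose k) * (b^k + (-b)^k) * a^(2*m - k)" for k
  have "(a + b)^(2*m) + (a - b)^(2*m) = (b + a)^(2*m) + (-b + a)^(2*m)"
    by (simp add: add.commute)
  also have "\<dots> = (\<Sum>k\<le>2*m. f k)"
    unfolding binomial_ring f_def sum.distrib[symmetric] by (rule sum.cong) (auto simp: algebra_simps)
  also have "\<dots> = (\<Sum>s\<le>m. f (2*s))"
    unfolding sum_atMost_even_odd by (simp add: f_def)
  also have "\<dots> = 2 * (\<Sum>s\<le>m. of_nat (2*m choose (2*s)) * (b^2)^s * (a^2)^(m - s))"
    unfolding f_def sum_distrib_left
    by (rule sum.cong) (auto simp: power_mult[symmetric] diff_mult_distrib2 algebra_simps)
  finally show ?thesis .
qed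

definition even_power_mat ::
    "nat \<Rightarrow> (nat \<Rightarrow> 'a) \<Rightarrow> (nat \<Rightarrow> 'a) \<Rightarrow> 'a \<Rightarrow> 'a \<Rightarrow> 'a::comm_ring_1 mat" where
  "even_power_mat m a b d1 d2 = mat (2*m+1) (2*m+1)
     (\<lambda>(j,k). (a j + b k)^(2*m) + (a j - b k)^(2*m) + d1 * (a j ^ 2 + d2 * b k ^ 2)^(2*m))"

(* Entry (e, s) is the coefficient of (a j ^ 2) ^ (2*m - e) * (b k ^ 2) ^ s in entry (j, k) of
   even_power_mat m a b d1 d2: the diagonal comes from d1 (a j^2 + d2 b k^2)^(2m), the m-th
   subdiagonal from (a j + b k)^(2m) + (a j - b k)^(2m). *)
definition even_power_coeff_mat :: "nat \<Rightarrow> 'a \<Rightarrow> 'a \<Rightarrow> 'a::comm_ring_1 mat" where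
  "even_power_coeff_mat m d1 d2 = mat (2*m+1) (2*m+1)
     (\<lambda>(e,s). (if e = s then d1 * d2 ^ s * of_nat (2*m choose s) else 0)
            + (if e = m + s then 2 * of_nat (2*m choose (2*s)) else 0))"

lemma index_even_power_mat:
  assumes "j < 2*m+1" and "k < 2*m+1"
  shows "even_power_mat m a b d1 d2 $$ (j,k) =
    d1 * (\<Sum>s\<le>2*m. of_nat (2*m choose s) * (d2 * b k ^ 2) ^ s * (a j ^ 2) ^ (2*m - s))
    + 2 * (\<Sum>s\<le>m. of_nat (2*m choose (2*s)) * (b k ^ 2) ^ s * (a j ^ 2) ^ (m - s))"
  using assms binomial_ring[of "d2 * b k ^ 2" "a j ^ 2" "2*m"] binomial_ring_even_part[of "a j" "b k" m]
  by (simp add: even_power_mat_def add.commute)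

lemma even_power_mat_factorization:
  "even_power_mat m a b d1 d2 =
     mat (2*m+1) (2*m+1) (\<lambda>(j,e). (a j ^ 2) ^ (2*m - e)) * even_power_coeff_mat m d1 d2
     * mat (2*m+1) (2*m+1) (\<lambda>(s,k). (b k ^ 2) ^ s)"
  (is "_ = ?X * ?T * ?Y")
proof (rule eq_matI)
  define n where "n = 2*m+1"
  fix j k assume "j < dim_row (?X * ?T * ?Y)" and "k < dim_col (?X * ?T * ?Y)"
  then have j: "j < n" and k: "k < n" by (auto simp: n_def even_power_coeff_mat_def)
  let ?x = "a j ^ 2" and ?y = "b k ^ 2"
  have XT: "(?X * ?T) $$ (j,s) * ?y ^ s = d1 * (of_nat (2*m choose s) * (d2 * ?y) ^ s * ?x ^ (2*m - s))
      + (if s \<le> m then 2 * of_nat (2*m choose (2*s)) * ?y ^ s * ?x ^ (m - s) else 0)"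
    if s: "s < n" for s
  proof -
    have "(?X * ?T) $$ (j,s)
        = (\<Sum>e<n. if e = s then ?x ^ (2*m - e) * (d1 * d2 ^ s * of_nat (2*m choose s)) else 0)
        + (\<Sum>e<n. if e = m + s then ?x ^ (2*m - e) * (2 * of_nat (2*m choose (2*s))) else 0)"
      using j s unfolding even_power_coeff_mat_def sum.distrib[symmetric] n_def[symmetric]
      by (auto simp: scalar_prod_def atLeast0LessThan distrib_left intro!: sum.cong)
    also have "\<dots> = d1 * d2 ^ s * of_nat (2*m choose s) * ?x ^ (2*m - s)
      + (if m + s < n then 2 * of_nat (2*m choose (2*s)) * ?x ^ (2*m - (m + s)) else 0)"
      using s by (simp add: algebra_simps)
    finally show ?thesis
      by (simp add: n_def algebra_simps)
  qed
  have "(?X * ?T * ?Y) $$ (j,k) = (\<Sum>s<n. (?X * ?T) $$ (j,s) * ?y ^ s)"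
    using j k unfolding even_power_coeff_mat_def n_def[symmetric] by (simp add: scalar_prod_def atLeast0LessThan)
  also have "\<dots> = d1 * (\<Sum>s<n. of_nat (2*m choose s) * (d2 * ?y) ^ s * ?x ^ (2*m - s))
      + (\<Sum>s<n. if s \<le> m then 2 * of_nat (2*m choose (2*s)) * ?y ^ s * ?x ^ (m - s) else 0)"
    unfolding sum_distrib_left sum.distrib[symmetric] by (intro sum.cong refl XT) simp
  also have "(\<Sum>s<n. if s \<le> m then 2 * of_nat (2*m choose (2*s)) * ?y ^ s * ?x ^ (m - s) else 0)
      = 2 * (\<Sum>s\<le>m. of_nat (2*m choose (2*s)) * ?y ^ s * ?x ^ (m - s))"
  proof -
    have "{s \<in> {..<n}. s \<le> m} = {..m}" by (auto simp: n_def)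
    then show ?thesis
      by (simp add: sum.inter_filter[symmetric] sum_distrib_left algebra_simps)
  qed
  also have "{..<n} = {..2*m}"
    by (auto simp: n_def)
  finally show "even_power_mat m a b d1 d2 $$ (j,k) = (?X * ?T * ?Y) $$ (j,k)"
    using j k by (simp add: index_even_power_mat n_def)
qed (simp_all add: even_power_mat_def even_power_coeff_mat_def)

lemma prod_power_lessThan:
  fixes c :: "'a::comm_monoid_mult"
  shows "(\<Prod>j<n. c ^ j) = c ^ (n * (n - 1) div 2)"
  using power_sum[of c "\<lambda>j. j" "{..<n}"] by (simp add: atLeast0LessThan[symmetric] Sum_Ico_nat)

lemma det_even_power_coeff_mat:
  assumes "0 < m"
  shows "det (even_power_coeff_mat m d1 d2)
    = d1 ^ (2*m+1) * d2 ^ (m * (2*m+1)) * (\<Prod>s\<le>2*m. of_nat (2*m choose s))"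
proof -
  define n where "n = 2*m+1"
  have T: "even_power_coeff_mat m d1 d2 \<in> carrier_mat n n"
    by (simp add: even_power_coeff_mat_def n_def)
  have "diag_mat (even_power_coeff_mat m d1 d2) = map (\<lambda>s. d1 * d2 ^ s * of_nat (2*m choose s)) [0..<n]"
    using assms by (auto simp: even_power_coeff_mat_def diag_mat_def n_def intro!: map_cong)
  moreover have "det (even_power_coeff_mat m d1 d2) = prod_list (diag_mat (even_power_coeff_mat m d1 d2))"
    by (rule det_lower_triangular[OF _ T]) (auto simp: even_power_coeff_mat_def n_def)
  ultimately have "det (even_power_coeff_mat m d1 d2) = (\<Prod>s<n. d1 * d2 ^ s * of_nat (2*m choose s))"
    by (simp add: prod.distinct_set_conv_list[symmetric] atLeast0LessThan)
  also have "\<dots> = d1 ^ n * d2 ^ (n * (n - 1) div 2) * (\<Prod>s<n. of_nat (2*m choose s))"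
    by (simp add: prod.distrib prod_power_lessThan)
  also have "{..<n} = {..2*m}"
    by (auto simp: n_def)
  finally show ?thesis
    by (simp add: n_def ac_simps)
qed

lemma det_even_power_mat:
  fixes a b :: "nat \<Rightarrow> 'a::comm_ring_1"
  assumes "0 < m"
  shows "det (even_power_mat m a b d1 d2) =
    (-1) ^ (m * (2*m+1)) * d1 ^ (2*m+1) * d2 ^ (m * (2*m+1)) * (\<Prod>r\<le>2*m. of_nat (2*m choose r))
    * (\<Prod>j\<le>2*m. \<Prod>i<j. (a j ^ 2 - a i ^ 2) * (b j ^ 2 - b i ^ 2))"
proof -
  define n where "n = 2*m+1"
  define x where "x j = a j ^ 2" for j
  define y where "y k = b k ^ 2" for k
  define X where "X = mat n n (\<lambda>(j,e). x j ^ (n - 1 - e))"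
  define Y where "Y = mat n n (\<lambda>(s,k). y k ^ s)"
  let ?T = "even_power_coeff_mat m d1 d2"
  have X: "X \<in> carrier_mat n n" and T: "?T \<in> carrier_mat n n" and Y: "Y \<in> carrier_mat n n"
    by (simp_all add: X_def Y_def even_power_coeff_mat_def n_def)
  have "even_power_mat m a b d1 d2 = X * ?T * Y"
    unfolding even_power_mat_factorization X_def Y_def x_def y_def n_def by simp
  then have "det (even_power_mat m a b d1 d2) = det X * det Y * det ?T"
    using det_mult[OF mult_carrier_mat[OF X T] Y] det_mult[OF X T] by simp
  also have "det X * det Y = (\<Prod>j<n. \<Prod>i<j. - ((x j - x i) * (y j - y i)))"
  proof -
    have "det Y = det (transpose_mat Y)"
      by (simp add: det_transpose[OF Y])
    also have "transpose_mat Y = mat n n (\<lambda>(k,s). y k ^ s)"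
      by (rule eq_matI) (auto simp: Y_def)
    finally have det_Y: "det Y = (\<Prod>j<n. \<Prod>i<j. y j - y i)"
      by (simp add: det_vandermonde)
    show ?thesis
      unfolding X_def det_vandermonde_rev det_Y by (simp add: prod.distrib[symmetric] algebra_simps)
  qed
  also have "\<dots> = (-1) ^ (n * (n - 1) div 2) * (\<Prod>j<n. \<Prod>i<j. (x j - x i) * (y j - y i))"
    by (simp add: prod_uminus prod.distrib prod_power_lessThan)
  also have "{..<n} = {..2*m}"
    by (auto simp: n_def)
  finally show ?thesis
    using assms by (simp add: det_even_power_coeff_mat n_def x_def y_def ac_simps)
qed

lemma det_cong:
  fixes A B :: "'a::unique_euclidean_ring mat"
  assumes A: "A \<in> carrier_mat n n" and B: "B \<in> carrier_mat n n"
    and entries: "\<And>i j. i < n \<Longrightarrow> j < n \<Longrightarrow> [A $$ (i,j) = B $$ (i,j)] (mod q)"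
  shows "[det A = det B] (mod q)"
  unfolding det_def'[OF A] det_def'[OF B]
proof (intro cong_sum cong_mult cong_refl cong_prod)
  fix r i assume "r \<in> {r. r permutes {0..<n}}" and "i \<in> {0..<n}"
  then show "[A $$ (i, r i) = B $$ (i, r i)] (mod q)"
    by (auto intro: entries simp: permutes_in_image)
qed

lemma prime_dvd_fact_iff_int:
  fixes p :: int
  assumes "prime p"
  shows "p dvd fact n \<longleftrightarrow> p \<le> int n"
proof -
  have "prime (nat p)" and p: "int (nat p) = p"
    using assms prime_ge_0_int by auto
  have "p dvd fact n \<longleftrightarrow> nat p dvd fact n"
    by (subst p[symmetric], subst of_nat_fact[symmetric], rule int_dvd_int_iff)
  also have "\<dots> \<longleftrightarrow> p \<le> int n"
    using prime_dvd_fact_iff[OF \<open>prime (nat p)\<close>] by (simp add: nat_le_iff)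
  finally show ?thesis .
qed

lemma prod_reflect_cong:
  fixes p :: int
  shows "[(\<Prod>k\<in>A. p - f k) = (-1) ^ card A * prod f A] (mod p)"
proof -
  have "[(\<Prod>k\<in>A. p - f k) = (\<Prod>k\<in>A. - f k)] (mod p)"
    by (rule cong_prod) (simp add: cong_iff_dvd_diff)
  then show ?thesis
    by (simp add: prod_uminus)
qed

lemma prod_binomial_fact:
  fixes n :: nat
  shows "(\<Prod>r\<le>n. of_nat (n choose r)) * (\<Prod>r\<le>n. fact r) ^ 2
    = (fact n ^ (n+1) :: 'a::{comm_semiring_1,semiring_char_0})"
proof -
  have "(\<Prod>r\<le>n. fact (n - r) :: 'a) = (\<Prod>r\<le>n. fact r)"
    by (rule prod.reindex_bij_witness[of _ "\<lambda>r. n - r" "\<lambda>r. n - r"]) auto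
  then have "(\<Prod>r\<le>n. of_nat (n choose r)) * (\<Prod>r\<le>n. fact r) ^ 2
      = (\<Prod>r\<le>n. of_nat (fact r * fact (n - r) * (n choose r)) :: 'a)"
    by (simp add: power2_eq_square prod.distrib ac_simps)
  also have "\<dots> = (\<Prod>r\<le>n. fact n)"
    by (intro prod.cong refl) (simp add: binomial_fact_lemma)
  finally show ?thesis
    by simp
qed

lemma fact_double_eq_prod_evens_odds:
  "(fact (2*m) :: int) = (\<Prod>k\<in>{1..m}. 2 * int k) * (\<Prod>k\<in>{1..m}. 2 * int k - 1)"
proof (induction m)
  case (Suc m)
  have "2 * Suc m = Suc (Suc (2*m))" by simp
  then show ?case
    by (simp only: fact_Suc Suc.IH prod.nat_ivl_Suc') (simp add: algebra_simps)
qed simp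

context
  fixes p :: int and m :: nat
  assumes prime_p: "prime p" and p_eq: "p = 4 * int m + 1"
begin

lemma m_pos: "0 < m"
  using prime_p p_eq by (cases m) auto

private lemma nat_p: "prime (nat p)" "int (nat p) = p" "nat p - 1 = 4*m"
  using prime_p by simp (use p_eq in simp)+

lemma Legendre_cong_power: "[Legendre a p = a ^ (2*m)] (mod p)"
proof -
  have "2 < nat p"
    using m_pos p_eq by linarith
  then have "[Legendre a (int (nat p)) = a ^ ((nat p - 1) div 2)] (mod int (nat p))"
    by (intro euler_criterion nat_p(1))
  then show ?thesis
    unfolding nat_p(2,3) by simp
qed

lemma fermat_cong: "\<not> p dvd a \<Longrightarrow> [a ^ (4*m) = 1] (mod p)"
proof -
  assume "\<not> p dvd a"
  then have "\<not> [a ^ 2 = 0] (mod p)"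
    using prime_p by (simp add: cong_0_iff prime_dvd_power_iff)
  moreover have "QuadRes p (a ^ 2)"
    unfolding QuadRes_def by (blast intro: cong_refl)
  ultimately have "Legendre (a ^ 2) p = 1"
    by (simp add: Legendre_def)
  then show ?thesis
    using Legendre_cong_power[of "a ^ 2"] by (simp add: power_mult[symmetric] cong_sym mult.commute)
qed

lemma QuadRes_if_power_cong_1:
  assumes "[a ^ (2*m) = 1] (mod p)"
  shows "\<not> p dvd a \<and> QuadRes p a"
proof -
  have L: "[Legendre a p = 1] (mod p)"
    using Legendre_cong_power assms by (rule cong_trans)
  have "Legendre a p = 1"
  proof (rule ccontr)
    assume "Legendre a p \<noteq> 1"
    then have "Legendre a p = 0 \<or> Legendre a p = -1"
      by (simp add: Legendre_def split: if_splits)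
    with L have "p dvd 1 \<or> p dvd 2"
      by (auto simp: cong_iff_dvd_diff)
    then show False
      using m_pos p_eq by (auto dest: zdvd_imp_le)
  qed
  then show ?thesis
    by (simp add: Legendre_def cong_0_iff split: if_splits)
qed

lemma not_dvd_fact: "r \<le> 2*m \<Longrightarrow> \<not> p dvd fact r"
  using prime_dvd_fact_iff_int[OF prime_p] p_eq by simp

lemma fact_square_cong: "[fact (2*m) ^ 2 = (-1 :: int)] (mod p)"
proof -
  have "(fact (4*m) :: int) = (\<Prod>k\<in>{1..2*m + 2*m}. int k)"
    by (simp add: fact_prod)
  also have "\<dots> = (\<Prod>k\<in>{1..2*m}. int k) * (\<Prod>k\<in>{2*m+1..2*m + 2*m}. int k)"
    by (rule prod.ub_add_nat) simp
  also have "(\<Prod>k\<in>{2*m+1..2*m + 2*m}. int k) = (\<Prod>k\<in>{1..2*m}. p - int k)"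
    by (rule prod.reindex_bij_witness[of _ "\<lambda>k. 4*m+1 - k" "\<lambda>k. 4*m+1 - k"]) (auto simp: p_eq)
  finally have
    "[fact (4*m) = (\<Prod>k\<in>{1..2*m}. int k) * ((-1) ^ (2*m) * (\<Prod>k\<in>{1..2*m}. int k))] (mod p)"
    using prod_reflect_cong[of p int "{1..2*m}"] by (simp add: cong_scalar_left)
  then have "[fact (4*m) = fact (2*m) ^ 2 :: int] (mod p)"
    by (simp add: fact_prod power2_eq_square)
  moreover have "[fact (4*m) = (-1 :: int)] (mod p)"
    using wilson_theorem[OF nat_p(1)] unfolding nat_p(2,3) .
  ultimately show ?thesis
    by (meson cong_sym cong_trans)
qed

lemma two_power_cong: "[2 ^ (2*m) = ((-1) ^ m :: int)] (mod p)"
proof -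
  have "2 ^ (2*m) * (fact (2*m) :: int) = (\<Prod>k\<in>{1..2*m}. 2 * int k)"
    by (simp add: fact_prod prod.distrib)
  also have "\<dots> = (\<Prod>k\<in>{1..m}. 2 * int k) * (\<Prod>k\<in>{m+1..2*m}. 2 * int k)"
    using prod.ub_add_nat[of 1 m "\<lambda>k. 2 * int k" m] by (simp only: mult_2)
  also have "(\<Prod>k\<in>{m+1..2*m}. 2 * int k) = (\<Prod>k\<in>{1..m}. p - (2 * int k - 1))"
    by (rule prod.reindex_bij_witness[of _ "\<lambda>k. 2*m+1 - k" "\<lambda>k. 2*m+1 - k"]) (auto simp: p_eq)
  finally have "[2 ^ (2*m) * fact (2*m)
      = (\<Prod>k\<in>{1..m}. 2 * int k) * ((-1) ^ m * (\<Prod>k\<in>{1..m}. 2 * int k - 1))] (mod p)"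
    using prod_reflect_cong[of p "\<lambda>k. 2 * int k - 1" "{1..m}"] by (simp add: cong_scalar_left)
  then have "[2 ^ (2*m) * fact (2*m) = (-1) ^ m * fact (2*m) :: int] (mod p)"
    unfolding fact_double_eq_prod_evens_odds by (simp add: ac_simps)
  moreover have "coprime (fact (2*m)) p"
    using not_dvd_fact[of "2*m"] prime_p by (simp add: prime_imp_coprime coprime_commute)
  ultimately show ?thesis
    by (simp add: cong_mult_rcancel)
qed

lemma double_binomial_product_power_cong:
  "[(2 * (\<Prod>r\<le>2*m. int (2*m choose r))) ^ (2*m) = 1] (mod p)"
proof -
  define C where "C = (\<Prod>r\<le>2*m. int (2*m choose r))"
  define F where "F = (\<Prod>r\<le>2*m. fact r :: int)"
  have "\<not> p dvd F"
    unfolding F_def using prime_p not_dvd_fact by (auto simp: prime_dvd_prod_iff)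
  then have "[C ^ (2*m) * F ^ (4*m) = C ^ (2*m) * 1] (mod p)"
    by (intro cong_scalar_left fermat_cong)
  moreover have "C ^ (2*m) * F ^ (4*m) = (fact (2*m) ^ 2) ^ (m * (2*m+1))"
  proof -
    have "C ^ (2*m) * F ^ (4*m) = (C * F ^ 2) ^ (2*m)"
      by (simp add: power_mult_distrib power_mult[symmetric] mult.commute)
    also have "\<dots> = (fact (2*m) ^ 2) ^ (m * (2*m+1))"
      unfolding C_def F_def prod_binomial_fact power_mult[symmetric] by (simp add: algebra_simps)
    finally show ?thesis .
  qed
  moreover have "[(fact (2*m) ^ 2) ^ (m * (2*m+1)) = ((-1) ^ (m * (2*m+1)) :: int)] (mod p)"
    by (intro cong_pow fact_square_cong)
  moreover have "(-1 :: int) ^ (m * (2*m+1)) = (-1) ^ m"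
    by (simp add: minus_one_power_iff)
  ultimately have "[C ^ (2*m) = (-1) ^ m] (mod p)"
    by (metis cong_sym cong_trans mult_1_right)
  then have "[2 ^ (2*m) * C ^ (2*m) = (-1) ^ m * (-1) ^ m] (mod p)"
    by (intro cong_mult two_power_cong)
  then show ?thesis
    by (simp add: C_def power_mult_distrib power_add[symmetric])
qed

lemma not_dvd_prod_diff_squares: "\<not> p dvd (\<Prod>j\<le>2*m. \<Prod>i<j. int j ^ 2 - int i ^ 2)"
proof
  assume "p dvd (\<Prod>j\<le>2*m. \<Prod>i<j. int j ^ 2 - int i ^ 2)"
  then obtain i j where "j \<le> 2*m" "i < j" and "p dvd (int j - int i) * (int j + int i)"
    using prime_p by (auto simp: prime_dvd_prod_iff power2_eq_square algebra_simps)
  moreover have "0 < int j - int i" "int j - int i < p" "0 < int j + int i" "int j + int i < p"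
    using calculation(1,2) p_eq by auto
  ultimately show False
    using prime_p by (auto simp: prime_dvd_mult_iff dest: zdvd_imp_le)
qed

lemma double_det_value_power_cong:
  assumes "s ^ 2 = 1"
  shows "[(2 * (s * (\<Prod>r\<le>2*m. int (2*m choose r))
             * (\<Prod>j\<le>2*m. \<Prod>i<j. int j ^ 2 - int i ^ 2) ^ 2)) ^ (2*m) = 1] (mod p)"
proof -
  define C where "C = (\<Prod>r\<le>2*m. int (2*m choose r))"
  define V where "V = (\<Prod>j\<le>2*m. \<Prod>i<j. int j ^ 2 - int i ^ 2)"
  have "s ^ (2*m) = 1"
    using assms by (simp add: power_mult)
  then have "(2 * (s * C * V ^ 2)) ^ (2*m) = (2 * C) ^ (2*m) * V ^ (4*m)"
    by (simp add: power_mult_distrib power_mult[symmetric])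
  also have "[\<dots> = 1 * 1] (mod p)"
    using not_dvd_prod_diff_squares unfolding C_def V_def
    by (intro cong_mult double_binomial_product_power_cong fermat_cong)
  finally show ?thesis
    by (simp add: C_def V_def)
qed

lemma det_legmat_cong:
  "[det (legmat p m d1 d2) = det (even_power_mat m int int d1 d2)] (mod p)"
  by (rule det_cong[of _ "2*m+1"])
    (auto simp: legmat_def even_power_mat_def intro!: cong_add cong_mult cong_refl Legendre_cong_power)

end

theorem corollary1p3:
  fixes p :: int and m :: nat and d1 d2 :: int
  assumes "prime p" and "p = 4 * int m + 1"
    and "d1 \<in> {1, -1}" and "d2 \<in> {1, -1}"
  shows "\<not> p dvd (2 * det (legmat p m d1 d2)) \<and> QuadRes p (2 * det (legmat p m d1 d2))
    \<and> [det (legmat p m d1 d2) =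
         (-1) ^ (m * (2*m+1)) * d1 ^ (2*m+1) * d2 ^ (m * (2*m+1))
         * (\<Prod>r\<in>{0..2*m}. int (2*m choose r))
         * (\<Prod>j\<in>{0..2*m}. \<Prod>i\<in>{0..<j}. (int j ^ 2 - int i ^ 2) ^ 2)] (mod p)"
proof -
  let ?L = "det (legmat p m d1 d2)"
  define S where "S = (-1::int) ^ (m * (2*m+1)) * d1 ^ (2*m+1) * d2 ^ (m * (2*m+1))"
  define C where "C = (\<Prod>r\<le>2*m. int (2*m choose r))"
  define V where "V = (\<Prod>j\<le>2*m. \<Prod>i<j. int j ^ 2 - int i ^ 2)"
  have "det (even_power_mat m int int d1 d2) = S * C * V ^ 2"
    using det_even_power_mat[OF m_pos[OF assms(1,2)]]
    by (simp add: S_def C_def V_def power2_eq_square prod.distrib)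
  then have det: "[?L = S * C * V ^ 2] (mod p)"
    using det_legmat_cong[OF assms(1,2), of d1 d2] by simp
  have "S ^ 2 = 1"
    using assms(3,4) by (auto simp: S_def power_mult_distrib power_mult[symmetric] minus_one_power_iff)
  with det have "[(2 * ?L) ^ (2*m) = 1] (mod p)"
    using double_det_value_power_cong[OF assms(1,2), folded C_def V_def]
    by (meson cong_pow cong_scalar_left cong_trans)
  then have "\<not> p dvd (2 * ?L) \<and> QuadRes p (2 * ?L)"
    by (rule QuadRes_if_power_cong_1[OF assms(1,2)])
  moreover have "S * C * V ^ 2 = (-1) ^ (m * (2*m+1)) * d1 ^ (2*m+1) * d2 ^ (m * (2*m+1))
      * (\<Prod>r\<in>{0..2*m}. int (2*m choose r))
      * (\<Prod>j\<in>{0..2*m}. \<Prod>i\<in>{0..<j}. (int j ^ 2 - int i ^ 2) ^ 2)"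
    by (simp add: S_def C_def V_def atLeast0AtMost atLeast0LessThan prod_power_distrib)
  ultimately show ?thesis
    using det by simp
qed

end
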